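(* Let $\mathbf{X},\mathbf{Y}$ be s$\mathcal{H}$rms. A map $\mathbf{Z}:[0,T]^2\to G(\mathcal{H})$ coincides with $\mathbf{X}\boxplus\mathbf{Y}$ if and only if $\mathbf{Z}_{s,t}=\mathbf{Z}_{s,u}\star\mathbf{Z}_{u,t}$ for all $s,u,t\in[0,T]$ and, for every $s\in[0,T]$, $$\mathbf{Z}_{s,t}=\mathbf{X}_{s,t}\star\mathbf{Y}_{s,t}+R_{s,t}$$ for some $R_{s,t}\in\mathcal{H}'$ with $\langle R_{s,t},x\rangle=o(|t-s|)$ as $t\to s$ for all $x\in\mathcal{H}$. Moreover $$\mathbf{X}_{s,t}\star\mathbf{Y}_{s,t}=\mathbf{Y}_{s,t}\star\mathbf{X}_{s,t}+r_{s,t}=\mathbf{X}_{s,t}+\mathbf{Y}_{s,t}-\mathbf{1}^*+r'_{s,t}$$ for some $r_{s,t},r'_{s,t}\in\mathcal{H}'$ with $\langle r_{s,t},x\rangle,\langle r'_{s,t},x\rangle=o(|t-s|)$ as $t\to s$ for all $x\in\mathcal{H}$.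
   Context: Fix $T>0$. $(\mathcal{H},\cdot,\Delta)$: connected, $\mathbb{N}$-graded, locally finite commutative Hopf algebra over $\mathbb{R}$ ($\mathcal{H}=\bigoplus_n\mathcal{H}_n$, $\dim\mathcal{H}_n<\infty$, $\mathcal{H}_0=\mathbb{R}\mathbf{1}$), counit $\mathbf{1}^*$. $\mathcal{H}'=\mathrm{Hom}(\mathcal{H},\mathbb{R})$ with pointwise topology and product $\langle\alpha\star\beta,h\rangle=\langle\alpha\otimes\beta,\Delta h\rangle$ (unit $\mathbf{1}^*$). $G(\mathcal{H})\subset\mathcal{H}'$: characters ($\alpha(hk)=\alpha(h)\alpha(k)$, $\alpha(\mathbf{1})=1$), a group under $\star$; $\mathfrak{g}(\mathcal{H})$: infinitesimal characters ($\alpha(hk)=\alpha(h)\mathbf{1}^*(k)+\mathbf{1}^*(h)\alpha(k)$). s$\mathcal{H}$rm: non-zero map $\mathbf{X}:[0,T]^2\to\mathcal{H}'$ with $\mathbf{X}_{s,t}\in G(\mathcal{H})$, $\mathbf{X}_{s,u}\star\mathbf{X}_{u,t}=\mathbf{X}_{s,t}$, and $t\mapsto\langle\mathbf{X}_{s,t},h\rangle$ smooth for all $h$ and $s$. Diagonal derivative $\dot{\mathbf{X}}_{s,s}=\partial_t|_{t=s}\mathbf{X}_{s,t}\in\mathfrak{g}(\mathcal{H})$. For a smooth $\eta:[0,T]\to\mathfrak{g}(\mathcal{H})$ the equation $\dot\gamma(t)=\gamma(t)\star\eta(t)$, $\gamma(0)=\mathbf{1}^*$, has a unique smooth solution (the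 Cartan development). The canonical sum $\mathbf{X}\boxplus\mathbf{Y}$ is the s$\mathcal{H}$rm $(s,t)\mapsto\mathbf{Z}_s^{-1}\star\mathbf{Z}_t$, where $\mathbf{Z}$ is the Cartan development of $t\mapsto\dot{\mathbf{X}}_{t,t}+\dot{\mathbf{Y}}_{t,t}$. *)

theory Defs
  imports Complex_Main "HOL-Library.Landau_Symbols" "HOL-Library.Function_Algebras"
begin

text \<open>The coproduct of H is represented by a function Delta mapping h to a finite
list of pairs (a,b), standing for the tensor sum of a (x) b in H (x) H.
Tensors are compared by evaluation against all elementary functionals
alpha (x) beta with alpha, beta linear (these separate points of H (x) H).\<close>

definition tpair :: "('h \<Rightarrow> real) \<Rightarrow> ('h \<Rightarrow> real) \<Rightarrow> ('h \<times> 'h) list \<Rightarrow> real" where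
  "tpair \<alpha> \<beta> L = sum_list (map (\<lambda>(a,b). \<alpha> a * \<beta> b) L)"

definition tensor_eq :: "('h::real_vector \<times> 'h) list \<Rightarrow> ('h \<times> 'h) list \<Rightarrow> bool" where
  "tensor_eq L M \<longleftrightarrow> (\<forall>\<alpha> \<beta>. linear \<alpha> \<longrightarrow> linear \<beta> \<longrightarrow> tpair \<alpha> \<beta> L = tpair \<alpha> \<beta> M)"

definition conv :: "('h \<Rightarrow> ('h \<times> 'h) list) \<Rightarrow> ('h \<Rightarrow> real) \<Rightarrow> ('h \<Rightarrow> real) \<Rightarrow> ('h \<Rightarrow> real)" where
  "conv \<Delta> \<alpha> \<beta> = (\<lambda>h. tpair \<alpha> \<beta> (\<Delta> h))"

definition conn_graded_hopf ::
  "('h::{comm_ring_1, real_algebra_1} \<Rightarrow> ('h \<times> 'h) list) \<Rightarrow> ('h \<Rightarrow> real) \<Rightarrow> (nat \<Rightarrow> 'h set) \<Rightarrow> bool" where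
  "conn_graded_hopf \<Delta> \<epsilon> Hg \<longleftrightarrow>
     \<comment> \<open>Delta is linear\<close>
     (\<forall>\<alpha> \<beta> h k (c::real). linear \<alpha> \<longrightarrow> linear \<beta> \<longrightarrow>
        tpair \<alpha> \<beta> (\<Delta> (h + k)) = tpair \<alpha> \<beta> (\<Delta> h) + tpair \<alpha> \<beta> (\<Delta> k) \<and>
        tpair \<alpha> \<beta> (\<Delta> (c *\<^sub>R h)) = c * tpair \<alpha> \<beta> (\<Delta> h)) \<and>
     \<comment> \<open>coassociativity\<close>
     (\<forall>\<alpha> \<beta> \<gamma> h. linear \<alpha> \<longrightarrow> linear \<beta> \<longrightarrow> linear \<gamma> \<longrightarrow>
        sum_list (map (\<lambda>(a,b). tpair \<alpha> \<beta> (\<Delta> a) * \<gamma> b) (\<Delta> h)) =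
        sum_list (map (\<lambda>(a,b). \<alpha> a * tpair \<beta> \<gamma> (\<Delta> b)) (\<Delta> h))) \<and>
     \<comment> \<open>counit\<close>
     linear \<epsilon> \<and>
     (\<forall>\<alpha> h. linear \<alpha> \<longrightarrow> tpair \<epsilon> \<alpha> (\<Delta> h) = \<alpha> h \<and> tpair \<alpha> \<epsilon> (\<Delta> h) = \<alpha> h) \<and>
     \<comment> \<open>Delta and eps are algebra morphisms\<close>
     (\<forall>\<alpha> \<beta> h k. linear \<alpha> \<longrightarrow> linear \<beta> \<longrightarrow>
        tpair \<alpha> \<beta> (\<Delta> (h * k)) =
        sum_list (map (\<lambda>(a,b). sum_list (map (\<lambda>(c,d). \<alpha> (a * c) * \<beta> (b * d)) (\<Delta> k))) (\<Delta> h))) \<and>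
     (\<forall>\<alpha> \<beta>. linear \<alpha> \<longrightarrow> linear \<beta> \<longrightarrow> tpair \<alpha> \<beta> (\<Delta> 1) = \<alpha> 1 * \<beta> 1) \<and>
     (\<forall>h k. \<epsilon> (h * k) = \<epsilon> h * \<epsilon> k) \<and> \<epsilon> 1 = 1 \<and>
     \<comment> \<open>antipode\<close>
     (\<exists>S::'h \<Rightarrow> 'h. linear S \<and>
        (\<forall>h. sum_list (map (\<lambda>(a,b). S a * b) (\<Delta> h)) = \<epsilon> h *\<^sub>R 1 \<and>
             sum_list (map (\<lambda>(a,b). a * S b) (\<Delta> h)) = \<epsilon> h *\<^sub>R 1)) \<and>
     \<comment> \<open>grading: H is the direct sum of the finite-dimensional subspaces H_n\<close>
     (\<forall>n. subspace (Hg n) \<and> (\<exists>B. finite B \<and> B \<subseteq> Hg n \<and> span B = Hg n)) \<and>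
     (\<forall>h. \<exists>!c::nat \<Rightarrow> 'h. (\<forall>n. c n \<in> Hg n) \<and> finite {n. c n \<noteq> 0} \<and>
            h = (\<Sum>n\<in>{n. c n \<noteq> 0}. c n)) \<and>
     (\<forall>m n a b. a \<in> Hg m \<longrightarrow> b \<in> Hg n \<longrightarrow> a * b \<in> Hg (m + n)) \<and>
     (\<forall>n h. h \<in> Hg n \<longrightarrow> (\<exists>L. tensor_eq (\<Delta> h) L \<and>
            (\<forall>(a,b)\<in>set L. \<exists>i j. i + j = n \<and> a \<in> Hg i \<and> b \<in> Hg j))) \<and>
     (\<forall>n h. 0 < n \<longrightarrow> h \<in> Hg n \<longrightarrow> \<epsilon> h = 0) \<and>
     \<comment> \<open>connected\<close>
     Hg 0 = range (\<lambda>r::real. r *\<^sub>R 1)"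

definition character :: "('h::{comm_ring_1, real_algebra_1} \<Rightarrow> real) \<Rightarrow> bool" where
  "character \<alpha> \<longleftrightarrow> linear \<alpha> \<and> (\<forall>h k. \<alpha> (h * k) = \<alpha> h * \<alpha> k) \<and> \<alpha> 1 = 1"

definition conv_inv :: "('h::real_vector \<Rightarrow> ('h \<times> 'h) list) \<Rightarrow> ('h \<Rightarrow> real) \<Rightarrow> ('h \<Rightarrow> real) \<Rightarrow> ('h \<Rightarrow> real)" where
  "conv_inv \<Delta> \<epsilon> \<alpha> = (THE \<beta>. linear \<beta> \<and> conv \<Delta> \<alpha> \<beta> = \<epsilon> \<and> conv \<Delta> \<beta> \<alpha> = \<epsilon>)"

definition smooth_on :: "real set \<Rightarrow> (real \<Rightarrow> real) \<Rightarrow> bool" where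
  "smooth_on S f \<longleftrightarrow> (\<exists>D::nat \<Rightarrow> real \<Rightarrow> real. (\<forall>x\<in>S. D 0 x = f x) \<and>
      (\<forall>n. \<forall>x\<in>S. (D n has_real_derivative D (Suc n) x) (at x within S)))"

definition shrm :: "('h::{comm_ring_1, real_algebra_1} \<Rightarrow> ('h \<times> 'h) list) \<Rightarrow> real \<Rightarrow>
     (real \<Rightarrow> real \<Rightarrow> 'h \<Rightarrow> real) \<Rightarrow> bool" where
  "shrm \<Delta> T X \<longleftrightarrow>
     (\<exists>s\<in>{0..T}. \<exists>t\<in>{0..T}. X s t \<noteq> (\<lambda>_. 0)) \<and>
     (\<forall>s\<in>{0..T}. \<forall>t\<in>{0..T}. character (X s t)) \<and>
     (\<forall>s\<in>{0..T}. \<forall>u\<in>{0..T}. \<forall>t\<in>{0..T}. conv \<Delta> (X s u) (X u t) = X s t) \<and>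
     (\<forall>s\<in>{0..T}. \<forall>h. smooth_on {0..T} (\<lambda>t. X s t h))"

definition diag_deriv :: "real \<Rightarrow> (real \<Rightarrow> real \<Rightarrow> 'h \<Rightarrow> real) \<Rightarrow> real \<Rightarrow> 'h \<Rightarrow> real" where
  "diag_deriv T X s = (\<lambda>h. THE D. ((\<lambda>t. X s t h) has_real_derivative D) (at s within {0..T}))"

definition cartan_dev :: "('h::{comm_ring_1, real_algebra_1} \<Rightarrow> ('h \<times> 'h) list) \<Rightarrow> ('h \<Rightarrow> real) \<Rightarrow> real \<Rightarrow>
     (real \<Rightarrow> 'h \<Rightarrow> real) \<Rightarrow> (real \<Rightarrow> 'h \<Rightarrow> real) \<Rightarrow> bool" where
  "cartan_dev \<Delta> \<epsilon> T \<eta> \<gamma> \<longleftrightarrow>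
     \<gamma> 0 = \<epsilon> \<and> (\<forall>t\<in>{0..T}. linear (\<gamma> t)) \<and>
     (\<forall>h. smooth_on {0..T} (\<lambda>t. \<gamma> t h)) \<and>
     (\<forall>t\<in>{0..T}. \<forall>h. ((\<lambda>u. \<gamma> u h) has_real_derivative conv \<Delta> (\<gamma> t) (\<eta> t) h) (at t within {0..T}))"

end

theory Submission
  imports Defs "HOL-Analysis.Analysis"
begin

text \<open>
The o(|t - s|) conditions are first-order contact conditions on the diagonal: a remainder that
vanishes at t = s is o(|t - s|) exactly when its derivative there is 0. By the product rule,
X_{s,t} * Y_{s,t}, Y_{s,t} * X_{s,t} and X_{s,t} + Y_{s,t} - 1* all equal 1* at t = s and have
derivative eta(s) = Xdot_{s,s} + Ydot_{s,s} there, which gives the expansions.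
The increments gamma_s^{-1} * gamma_t of the Cartan development satisfy Chen's relation and have
derivative eta(s) at t = s. Conversely, if Z satisfies Chen's relation and has derivative eta(s)
at t = s, then u |-> gamma_s * Z_{s,u} solves the Cartan equation d gamma = gamma * eta with
value gamma_s at u = s, hence equals gamma. Uniqueness for this linear equation holds degree by
degree because eta kills H_0, and inverses in G(H) are Neumann series sum_n (1* - alpha)^{*n},
which are locally finite by connectedness.
\<close>

lemma tpair_Nil [simp]: "tpair \<alpha> \<beta> [] = 0"
  by (simp add: tpair_def)

lemma tpair_Cons [simp]: "tpair \<alpha> \<beta> (p # L) = \<alpha> (fst p) * \<beta> (snd p) + tpair \<alpha> \<beta> L"
  by (simp add: tpair_def split_beta)

lemma tpair_eq_0: "(\<And>a b. (a, b) \<in> set L \<Longrightarrow> \<alpha> a * \<beta> b = 0) \<Longrightarrow> tpair \<alpha> \<beta> L = 0"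
  by (induction L) auto

lemma tpair_sums_left:
  "(\<And>a. (\<lambda>n. f n a) sums g a) \<Longrightarrow> (\<lambda>n. tpair (f n) \<beta> L) sums tpair g \<beta> L"
  by (induction L) (auto intro!: sums_add sums_mult2)

lemma tpair_sums_right:
  "(\<And>b. (\<lambda>n. f n b) sums g b) \<Longrightarrow> (\<lambda>n. tpair \<alpha> (f n) L) sums tpair \<alpha> g L"
  by (induction L) (auto intro!: sums_add sums_mult)

lemma tpair_has_derivative:
  assumes "\<And>a. ((\<lambda>t. A t a) has_real_derivative A' a) (at t0 within S)"
    and "\<And>b. ((\<lambda>t. B t b) has_real_derivative B' b) (at t0 within S)"
  shows "((\<lambda>t. tpair (A t) (B t) L) has_real_derivative tpair A' (B t0) L + tpair (A t0) B' L)
           (at t0 within S)"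
proof (induction L)
  case (Cons p L)
  from DERIV_add[OF DERIV_mult[OF assms(1) assms(2)] Cons.IH] show ?case
    by (simp add: algebra_simps)
qed simp

lemma conv_has_derivative:
  assumes "\<And>a. ((\<lambda>t. A t a) has_real_derivative A' a) (at t0 within S)"
    and "\<And>b. ((\<lambda>t. B t b) has_real_derivative B' b) (at t0 within S)"
  shows "((\<lambda>t. conv \<Delta> (A t) (B t) x) has_real_derivative conv \<Delta> A' (B t0) x + conv \<Delta> (A t0) B' x)
           (at t0 within S)"
  unfolding conv_def using assms by (rule tpair_has_derivative)

lemma conv_has_derivative_right:
  assumes "\<And>b. ((\<lambda>t. B t b) has_real_derivative B' b) (at t0 within S)"
  shows "((\<lambda>t. conv \<Delta> \<alpha> (B t) x) has_real_derivative conv \<Delta> \<alpha> B' x) (at t0 within S)"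
proof -
  have "((\<lambda>t. conv \<Delta> \<alpha> (B t) x) has_real_derivative conv \<Delta> (\<lambda>_. 0) (B t0) x + conv \<Delta> \<alpha> B' x)
          (at t0 within S)"
    by (rule conv_has_derivative) (simp_all add: assms)
  then show ?thesis by (simp add: conv_def tpair_eq_0)
qed

lemma conv_diff_left: "conv \<Delta> (\<alpha> - \<beta>) \<gamma> = conv \<Delta> \<alpha> \<gamma> - conv \<Delta> \<beta> \<gamma>"
proof -
  have "tpair (\<alpha> - \<beta>) \<gamma> L = tpair \<alpha> \<gamma> L - tpair \<beta> \<gamma> L" for L
    by (induction L) (simp_all add: algebra_simps)
  then show ?thesis by (simp add: conv_def fun_eq_iff)
qed

lemma conv_diff_right: "conv \<Delta> \<alpha> (\<beta> - \<gamma>) = conv \<Delta> \<alpha> \<beta> - conv \<Delta> \<alpha> \<gamma>"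
proof -
  have "tpair \<alpha> (\<beta> - \<gamma>) L = tpair \<alpha> \<beta> L - tpair \<alpha> \<gamma> L" for L
    by (induction L) (simp_all add: algebra_simps)
  then show ?thesis by (simp add: conv_def fun_eq_iff)
qed

lemma conv_sums_left:
  "(\<And>a. (\<lambda>n. f n a) sums g a) \<Longrightarrow> (\<lambda>n. conv \<Delta> (f n) \<beta> x) sums conv \<Delta> g \<beta> x"
  unfolding conv_def by (rule tpair_sums_left)

lemma conv_sums_right:
  "(\<And>b. (\<lambda>n. f n b) sums g b) \<Longrightarrow> (\<lambda>n. conv \<Delta> \<alpha> (f n) x) sums conv \<Delta> \<alpha> g x"
  unfolding conv_def by (rule tpair_sums_right)

section \<open>First-order contact at a point\<close>

lemma has_real_derivative_unique_atLeastAtMost: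
  assumes "a < b" "x \<in> {a..b}"
    and "(f has_real_derivative D) (at x within {a..b})"
    and "(f has_real_derivative E) (at x within {a..b})"
  shows "D = E"
  using vector_derivative_unique_within_closed_interval[of a b x f D E] assms
  by (simp add: has_real_derivative_iff_has_vector_derivative cbox_interval)

lemma has_real_derivative_transform_on:
  assumes "(f has_real_derivative D) (at x within S)" "x \<in> S" "\<And>y. y \<in> S \<Longrightarrow> f y = g y"
  shows "(g has_real_derivative D) (at x within S)"
  using has_field_derivative_transform_within[OF assms(1) zero_less_one assms(2)] assms(3) by blast

lemma smooth_on_has_real_derivative:
  assumes "smooth_on S f" "x \<in> S"
  obtains D where "(f has_real_derivative D) (at x within S)"
proof -
  obtain Dn where "\<forall>y\<in>S. Dn 0 y = f y"
    and "\<forall>n. \<forall>y\<in>S. (Dn n has_real_derivative Dn (Suc n) y) (at y within S)"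
    using assms(1) unfolding smooth_on_def by blast
  then have "(f has_real_derivative Dn 1 x) (at x within S)"
    using assms(2) by (auto intro: has_real_derivative_transform_on)
  then show ?thesis by (rule that)
qed

lemma smallo_abs_iff_has_derivative_zero:
  fixes h :: "real \<Rightarrow> real"
  assumes "h s = 0"
  shows "h \<in> o[at s within S](\<lambda>t. \<bar>t - s\<bar>) \<longleftrightarrow> (h has_real_derivative 0) (at s within S)"
proof -
  have "h \<in> o[at s within S](\<lambda>t. \<bar>t - s\<bar>) \<longleftrightarrow> ((\<lambda>t. h t / \<bar>t - s\<bar>) \<longlongrightarrow> 0) (at s within S)"
    using smalloD_tendsto smalloI_tendsto[of h "\<lambda>t. \<bar>t - s\<bar>"]
      eventually_at_filter[of "\<lambda>t. \<bar>t - s\<bar> \<noteq> 0"] by fastforce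
  also have "\<dots> \<longleftrightarrow> ((\<lambda>t. h t / (t - s)) \<longlongrightarrow> 0) (at s within S)"
  proof -
    have "(\<lambda>t. \<bar>h t / \<bar>t - s\<bar>\<bar>) = (\<lambda>t. \<bar>h t / (t - s)\<bar>)"
      by (simp add: abs_divide)
    then show ?thesis
      unfolding tendsto_rabs_zero_iff[of "\<lambda>t. h t / \<bar>t - s\<bar>", symmetric]
        tendsto_rabs_zero_iff[of "\<lambda>t. h t / (t - s)", symmetric] by simp
  qed
  also have "\<dots> \<longleftrightarrow> (h has_real_derivative 0) (at s within S)"
    by (simp add: has_field_derivative_iff assms)
  finally show ?thesis .
qed

lemma remainder_smallo_iff_has_derivative:
  fixes F G :: "real \<Rightarrow> 'a::real_vector \<Rightarrow> real"
  assumes s: "s \<in> S" and "F s = G s"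
    and "\<And>t. t \<in> S \<Longrightarrow> linear (F t)" and "\<And>t. t \<in> S \<Longrightarrow> linear (G t)"
    and F_deriv: "\<And>x. ((\<lambda>t. F t x) has_real_derivative D x) (at s within S)"
  shows "(\<exists>R. (\<forall>t\<in>S. linear (R t) \<and> G t = F t + R t) \<and>
              (\<forall>x. (\<lambda>t. R t x) \<in> o[at s within S](\<lambda>t. \<bar>t - s\<bar>)))
         \<longleftrightarrow> (\<forall>x. ((\<lambda>t. G t x) has_real_derivative D x) (at s within S))"
proof
  assume "\<exists>R. (\<forall>t\<in>S. linear (R t) \<and> G t = F t + R t) \<and>
              (\<forall>x. (\<lambda>t. R t x) \<in> o[at s within S](\<lambda>t. \<bar>t - s\<bar>))"
  then obtain R where R: "\<And>t. t \<in> S \<Longrightarrow> G t = F t + R t"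
    and R_smallo: "\<And>x. (\<lambda>t. R t x) \<in> o[at s within S](\<lambda>t. \<bar>t - s\<bar>)"
    by blast
  show "\<forall>x. ((\<lambda>t. G t x) has_real_derivative D x) (at s within S)"
  proof
    fix x
    have "R s x = 0"
      using R[OF s] \<open>F s = G s\<close> by (simp add: fun_eq_iff)
    then have "((\<lambda>t. R t x) has_real_derivative 0) (at s within S)"
      using R_smallo[of x] by (simp only: smallo_abs_iff_has_derivative_zero)
    from DERIV_add[OF F_deriv this]
    have "((\<lambda>t. F t x + R t x) has_real_derivative D x) (at s within S)"
      by simp
    then show "((\<lambda>t. G t x) has_real_derivative D x) (at s within S)"
      by (rule has_real_derivative_transform_on) (simp_all add: s R)
  qed
next
  assume G_deriv: "\<forall>x. ((\<lambda>t. G t x) has_real_derivative D x) (at s within S)"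
  define R where "R t = (\<lambda>x. G t x - F t x)" for t
  have "((\<lambda>t. R t x) has_real_derivative 0) (at s within S)" for x
    using DERIV_diff[OF G_deriv[rule_format, of x] F_deriv[of x]] by (simp add: R_def)
  moreover have "R s x = 0" for x
    by (simp add: R_def \<open>F s = G s\<close>)
  ultimately have "(\<lambda>t. R t x) \<in> o[at s within S](\<lambda>t. \<bar>t - s\<bar>)" for x
    by (simp only: smallo_abs_iff_has_derivative_zero)
  moreover have "linear (R t) \<and> G t = F t + R t" if "t \<in> S" for t
    unfolding R_def using assms(3,4)[OF that]
    by (simp add: fun_eq_iff linear_compose_sub)
  ultimately show "\<exists>R. (\<forall>t\<in>S. linear (R t) \<and> G t = F t + R t) \<and>
              (\<forall>x. (\<lambda>t. R t x) \<in> o[at s within S](\<lambda>t. \<bar>t - s\<bar>))"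
    by blast
qed

section \<open>The character group of a connected graded Hopf algebra\<close>

definition conv_pow ::
  "('h \<Rightarrow> ('h \<times> 'h) list) \<Rightarrow> ('h \<Rightarrow> real) \<Rightarrow> ('h \<Rightarrow> real) \<Rightarrow> nat \<Rightarrow> 'h \<Rightarrow> real"
  where "conv_pow \<Delta> \<epsilon> \<mu> n = (conv \<Delta> \<mu> ^^ n) \<epsilon>"

lemma conv_pow_0 [simp]: "conv_pow \<Delta> \<epsilon> \<mu> 0 = \<epsilon>"
  by (simp add: conv_pow_def)

lemma conv_pow_Suc [simp]: "conv_pow \<Delta> \<epsilon> \<mu> (Suc n) = conv \<Delta> \<mu> (conv_pow \<Delta> \<epsilon> \<mu> n)"
  by (simp add: conv_pow_def)

locale hopf =
  fixes \<Delta> :: "'h::{comm_ring_1, real_algebra_1} \<Rightarrow> ('h \<times> 'h) list"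
    and \<epsilon> :: "'h \<Rightarrow> real" and Hg :: "nat \<Rightarrow> 'h set"
  assumes conn_graded_hopf: "conn_graded_hopf \<Delta> \<epsilon> Hg"
begin

lemmas hopf_laws = conn_graded_hopf[unfolded conn_graded_hopf_def]

lemma conv_linear:
  assumes "linear \<alpha>" "linear \<beta>"
  shows "linear (conv \<Delta> \<alpha> \<beta>)"
proof -
  have "tpair \<alpha> \<beta> (\<Delta> (h + k)) = tpair \<alpha> \<beta> (\<Delta> h) + tpair \<alpha> \<beta> (\<Delta> k) \<and>
        tpair \<alpha> \<beta> (\<Delta> (c *\<^sub>R h)) = c * tpair \<alpha> \<beta> (\<Delta> h)" for h k c
    using hopf_laws assms by (elim conjE) blast
  then show ?thesis
    unfolding conv_def by (intro linearI) simp_all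
qed

lemma conv_assoc:
  assumes "linear \<alpha>" "linear \<beta>" "linear \<gamma>"
  shows "conv \<Delta> (conv \<Delta> \<alpha> \<beta>) \<gamma> = conv \<Delta> \<alpha> (conv \<Delta> \<beta> \<gamma>)"
proof
  fix h
  have "conv \<Delta> (conv \<Delta> \<alpha> \<beta>) \<gamma> h = (\<Sum>(a, b)\<leftarrow>\<Delta> h. tpair \<alpha> \<beta> (\<Delta> a) * \<gamma> b)"
    by (simp add: conv_def tpair_def[of "\<lambda>h. tpair \<alpha> \<beta> (\<Delta> h)"])
  also have "\<dots> = (\<Sum>(a, b)\<leftarrow>\<Delta> h. \<alpha> a * tpair \<beta> \<gamma> (\<Delta> b))"
    using hopf_laws assms by (elim conjE) blast
  also have "\<dots> = conv \<Delta> \<alpha> (conv \<Delta> \<beta> \<gamma>) h"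
    by (simp add: conv_def tpair_def[of _ "\<lambda>h. tpair \<beta> \<gamma> (\<Delta> h)"])
  finally show "conv \<Delta> (conv \<Delta> \<alpha> \<beta>) \<gamma> h = conv \<Delta> \<alpha> (conv \<Delta> \<beta> \<gamma>) h" .
qed

lemma counit_linear: "linear \<epsilon>"
  using hopf_laws by (elim conjE) blast

lemma counit_unit: "\<epsilon> 1 = 1"
  using hopf_laws by (elim conjE) blast

lemma conv_counit_left: "linear \<alpha> \<Longrightarrow> conv \<Delta> \<epsilon> \<alpha> = \<alpha>"
proof -
  assume "linear \<alpha>"
  then have "tpair \<epsilon> \<alpha> (\<Delta> h) = \<alpha> h" for h
    using hopf_laws by (elim conjE) blast
  then show ?thesis by (simp add: conv_def fun_eq_iff)
qed

lemma conv_counit_right: "linear \<alpha> \<Longrightarrow> conv \<Delta> \<alpha> \<epsilon> = \<alpha>"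
proof -
  assume "linear \<alpha>"
  then have "tpair \<alpha> \<epsilon> (\<Delta> h) = \<alpha> h" for h
    using hopf_laws by (elim conjE) blast
  then show ?thesis by (simp add: conv_def fun_eq_iff)
qed

lemma conv_at_unit: "linear \<alpha> \<Longrightarrow> linear \<beta> \<Longrightarrow> conv \<Delta> \<alpha> \<beta> 1 = \<alpha> 1 * \<beta> 1"
  unfolding conv_def using hopf_laws by (elim conjE) blast

lemma graded_decomposition: "\<exists>S c. finite S \<and> (\<forall>n\<in>S. c n \<in> Hg n) \<and> x = (\<Sum>n\<in>S. c n)"
proof -
  have "\<forall>h. \<exists>!c::nat \<Rightarrow> 'h. (\<forall>n. c n \<in> Hg n) \<and> finite {n. c n \<noteq> 0} \<and>
          h = (\<Sum>n\<in>{n. c n \<noteq> 0}. c n)"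
    using hopf_laws by (elim conjE) assumption
  then obtain c where "\<forall>n. c n \<in> Hg n" "finite {n. c n \<noteq> 0}" "x = (\<Sum>n\<in>{n. c n \<noteq> 0}. c n)"
    by (meson ex1_implies_ex)
  then show ?thesis by blast
qed

lemma coproduct_graded:
  assumes "x \<in> Hg m"
  shows "\<exists>L. tensor_eq (\<Delta> x) L \<and> (\<forall>(a, b)\<in>set L. \<exists>i j. i + j = m \<and> a \<in> Hg i \<and> b \<in> Hg j)"
proof -
  have "\<forall>n h. h \<in> Hg n \<longrightarrow> (\<exists>L. tensor_eq (\<Delta> h) L \<and>
          (\<forall>(a, b)\<in>set L. \<exists>i j. i + j = n \<and> a \<in> Hg i \<and> b \<in> Hg j))"
    using hopf_laws by (elim conjE) assumption
  then show ?thesis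
    using assms by blast
qed

lemma degree_zero_vanishes:
  assumes "linear f" "f 1 = 0" "b \<in> Hg 0"
  shows "f b = 0"
proof -
  have "Hg 0 = range (\<lambda>r::real. r *\<^sub>R 1)"
    using hopf_laws by (elim conjE) blast
  then show ?thesis
    using assms by (auto simp: linear_scale)
qed

lemma conv_vanishes_homogeneous:
  assumes "linear \<alpha>" "linear \<beta>" "x \<in> Hg m"
    and "\<And>i j a b. i + j = m \<Longrightarrow> a \<in> Hg i \<Longrightarrow> b \<in> Hg j \<Longrightarrow> \<alpha> a * \<beta> b = 0"
  shows "conv \<Delta> \<alpha> \<beta> x = 0"
proof -
  obtain L where "tensor_eq (\<Delta> x) L"
    and L: "\<forall>(a, b)\<in>set L. \<exists>i j. i + j = m \<and> a \<in> Hg i \<and> b \<in> Hg j"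
    using coproduct_graded[OF assms(3)] by blast
  then have "conv \<Delta> \<alpha> \<beta> x = tpair \<alpha> \<beta> L"
    using assms(1,2) by (simp add: conv_def tensor_eq_def)
  also have "\<dots> = 0"
    using L assms(4) by (intro tpair_eq_0) blast
  finally show ?thesis .
qed

lemma linear_vanishes_by_grading:
  assumes "linear f" "\<And>m y. y \<in> Hg m \<Longrightarrow> f y = 0"
  shows "f x = 0"
proof -
  obtain S c where "\<forall>n\<in>S. c n \<in> Hg n" "x = (\<Sum>n\<in>S. c n)"
    using graded_decomposition by blast
  then show ?thesis
    using assms by (auto simp: linear_sum intro: sum.neutral)
qed

lemma conv_pow_linear: "linear \<mu> \<Longrightarrow> linear (conv_pow \<Delta> \<epsilon> \<mu> n)"
  by (induction n) (simp_all add: counit_linear conv_linear)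

lemma conv_pow_Suc_right:
  assumes "linear \<mu>"
  shows "conv_pow \<Delta> \<epsilon> \<mu> (Suc n) = conv \<Delta> (conv_pow \<Delta> \<epsilon> \<mu> n) \<mu>"
proof (induction n)
  case 0
  then show ?case by (simp add: assms conv_counit_left conv_counit_right)
next
  case (Suc n)
  have "conv_pow \<Delta> \<epsilon> \<mu> (Suc (Suc n)) = conv \<Delta> \<mu> (conv \<Delta> (conv_pow \<Delta> \<epsilon> \<mu> n) \<mu>)"
    using Suc by simp
  also have "\<dots> = conv \<Delta> (conv_pow \<Delta> \<epsilon> \<mu> (Suc n)) \<mu>"
    using assms by (simp add: conv_assoc conv_pow_linear)
  finally show ?case .
qed

lemma conv_pow_vanishes_below:
  assumes "linear \<mu>" "\<mu> 1 = 0"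
  shows "y \<in> Hg m \<Longrightarrow> m < n \<Longrightarrow> conv_pow \<Delta> \<epsilon> \<mu> n y = 0"
proof (induction n arbitrary: m y)
  case (Suc n)
  show ?case
    unfolding conv_pow_Suc
  proof (rule conv_vanishes_homogeneous[OF assms(1) conv_pow_linear[OF assms(1)] Suc.prems(1)])
    fix i j a b
    assume "i + j = m" "a \<in> Hg i" "b \<in> Hg j"
    note \<open>m < Suc n\<close>
    show "\<mu> a * conv_pow \<Delta> \<epsilon> \<mu> n b = 0"
    proof (cases "i = 0")
      case True
      with \<open>a \<in> Hg i\<close> have "\<mu> a = 0"
        using degree_zero_vanishes[OF assms] by simp
      then show ?thesis by simp
    next
      case False
      with \<open>i + j = m\<close> \<open>m < Suc n\<close> have "j < n" by simp
      with Suc.IH \<open>b \<in> Hg j\<close> show ?thesis by simp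
    qed
  qed
qed simp

lemma conv_pow_eventually_zero:
  assumes "linear \<mu>" "\<mu> 1 = 0"
  shows "eventually (\<lambda>n. conv_pow \<Delta> \<epsilon> \<mu> n x = 0) sequentially"
proof -
  obtain S c where S: "finite S" "\<forall>k\<in>S. c k \<in> Hg k" "x = (\<Sum>k\<in>S. c k)"
    using graded_decomposition by blast
  have "eventually (\<lambda>n. conv_pow \<Delta> \<epsilon> \<mu> n (c k) = 0) sequentially" if "k \<in> S" for k
    using eventually_gt_at_top[of k]
    by (rule eventually_mono) (simp add: conv_pow_vanishes_below[OF assms, of "c k" k] S(2) that)
  then have "eventually (\<lambda>n. \<forall>k\<in>S. conv_pow \<Delta> \<epsilon> \<mu> n (c k) = 0) sequentially"
    using S(1) by (simp add: eventually_ball_finite)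
  then show ?thesis
    by eventually_elim (simp add: S(3) linear_sum conv_pow_linear assms(1))
qed

lemma conv_pow_sums:
  assumes "linear \<mu>" "\<mu> 1 = 0"
  shows "(\<lambda>n. conv_pow \<Delta> \<epsilon> \<mu> n x) sums (\<Sum>n. conv_pow \<Delta> \<epsilon> \<mu> n x)"
  using summable_cong[OF conv_pow_eventually_zero[OF assms]] by (simp add: summable_sums)

lemma conv_pow_telescope:
  assumes "linear \<mu>" "\<mu> 1 = 0"
  shows "(\<lambda>n. conv_pow \<Delta> \<epsilon> \<mu> n x - conv_pow \<Delta> \<epsilon> \<mu> (Suc n) x) sums \<epsilon> x"
  using telescope_sums'[OF tendsto_eventually[OF conv_pow_eventually_zero[OF assms]]] by simp

lemma conv_pow_suminf_linear:
  assumes "linear \<mu>" "\<mu> 1 = 0"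
  shows "linear (\<lambda>x. \<Sum>n. conv_pow \<Delta> \<epsilon> \<mu> n x)"
proof (rule linearI)
  fix x y
  have "(\<lambda>n. conv_pow \<Delta> \<epsilon> \<mu> n (x + y)) sums ((\<Sum>n. conv_pow \<Delta> \<epsilon> \<mu> n x) + (\<Sum>n. conv_pow \<Delta> \<epsilon> \<mu> n y))"
    using sums_add[OF conv_pow_sums[OF assms] conv_pow_sums[OF assms]]
    by (simp add: linear_add conv_pow_linear assms(1))
  then show "(\<Sum>n. conv_pow \<Delta> \<epsilon> \<mu> n (x + y)) = (\<Sum>n. conv_pow \<Delta> \<epsilon> \<mu> n x) + (\<Sum>n. conv_pow \<Delta> \<epsilon> \<mu> n y)"
    by (rule sums_unique[symmetric])
next
  fix r x
  have "(\<lambda>n. conv_pow \<Delta> \<epsilon> \<mu> n (r *\<^sub>R x)) sums (r * (\<Sum>n. conv_pow \<Delta> \<epsilon> \<mu> n x))"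
    using sums_mult[OF conv_pow_sums[OF assms]] by (simp add: linear_scale conv_pow_linear assms(1))
  from sums_unique[OF this]
  show "(\<Sum>n. conv_pow \<Delta> \<epsilon> \<mu> n (r *\<^sub>R x)) = r *\<^sub>R (\<Sum>n. conv_pow \<Delta> \<epsilon> \<mu> n x)"
    by simp
qed

text \<open>The inverse of \<open>\<alpha> = \<epsilon> - \<mu>\<close> is the Neumann series \<open>\<Sum>n. \<mu>\<^sup>\<star>\<^sup>n\<close>,
  a finite sum at every point.\<close>

lemma conv_inverse_exists:
  assumes "linear \<alpha>" "\<alpha> 1 = 1"
  shows "\<exists>\<beta>. linear \<beta> \<and> conv \<Delta> \<alpha> \<beta> = \<epsilon> \<and> conv \<Delta> \<beta> \<alpha> = \<epsilon>"
proof -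
  define \<mu> where "\<mu> = \<epsilon> - \<alpha>"
  have \<mu>: "linear \<mu>" "\<mu> 1 = 0"
    using assms counit_linear counit_unit by (simp_all add: \<mu>_def fun_diff_def linear_compose_sub)
  have \<alpha>_eq: "\<alpha> = \<epsilon> - \<mu>"
    by (simp add: \<mu>_def)
  let ?P = "conv_pow \<Delta> \<epsilon> \<mu>"
  define \<beta> where "\<beta> x = (\<Sum>n. ?P n x)" for x
  have "conv \<Delta> \<alpha> \<beta> = \<epsilon>"
  proof
    fix x
    have "(\<lambda>n. conv \<Delta> \<alpha> (?P n) x) sums conv \<Delta> \<alpha> \<beta> x"
      unfolding \<beta>_def by (rule conv_sums_right) (rule conv_pow_sums[OF \<mu>])
    moreover have "conv \<Delta> \<alpha> (?P n) x = ?P n x - ?P (Suc n) x" for n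
      by (simp add: \<alpha>_eq conv_diff_left conv_counit_left conv_pow_linear \<mu>)
    ultimately show "conv \<Delta> \<alpha> \<beta> x = \<epsilon> x"
      using sums_unique2[OF conv_pow_telescope[OF \<mu>]] by (simp del: conv_pow_Suc)
  qed
  moreover have "conv \<Delta> \<beta> \<alpha> = \<epsilon>"
  proof
    fix x
    have "(\<lambda>n. conv \<Delta> (?P n) \<alpha> x) sums conv \<Delta> \<beta> \<alpha> x"
      unfolding \<beta>_def by (rule conv_sums_left) (rule conv_pow_sums[OF \<mu>])
    moreover have "conv \<Delta> (?P n) \<alpha> x = ?P n x - ?P (Suc n) x" for n
      by (simp add: \<alpha>_eq conv_diff_right conv_counit_right conv_pow_linear conv_pow_Suc_right \<mu>
          del: conv_pow_Suc)
    ultimately show "conv \<Delta> \<beta> \<alpha> x = \<epsilon> x"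
      using sums_unique2[OF conv_pow_telescope[OF \<mu>]] by (simp del: conv_pow_Suc)
  qed
  moreover have "linear \<beta>"
    unfolding \<beta>_def using conv_pow_suminf_linear[OF \<mu>] by simp
  ultimately show ?thesis by blast
qed

lemma conv_inv:
  assumes "linear \<alpha>" "\<alpha> 1 = 1"
  shows "linear (conv_inv \<Delta> \<epsilon> \<alpha>)" "conv \<Delta> \<alpha> (conv_inv \<Delta> \<epsilon> \<alpha>) = \<epsilon>"
    "conv \<Delta> (conv_inv \<Delta> \<epsilon> \<alpha>) \<alpha> = \<epsilon>"
proof -
  obtain \<beta> where \<beta>: "linear \<beta>" "conv \<Delta> \<alpha> \<beta> = \<epsilon>" "conv \<Delta> \<beta> \<alpha> = \<epsilon>"
    using conv_inverse_exists[OF assms] by blast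
  have "\<gamma> = \<beta>" if "linear \<gamma>" "conv \<Delta> \<gamma> \<alpha> = \<epsilon>" for \<gamma>
  proof -
    have "\<gamma> = conv \<Delta> \<gamma> (conv \<Delta> \<alpha> \<beta>)"
      using that(1) \<beta>(2) by (simp add: conv_counit_right)
    also have "\<dots> = conv \<Delta> (conv \<Delta> \<gamma> \<alpha>) \<beta>"
      using conv_assoc that(1) assms(1) \<beta>(1) by simp
    also have "\<dots> = \<beta>"
      using that(2) \<beta>(1) by (simp add: conv_counit_left)
    finally show ?thesis .
  qed
  then have "conv_inv \<Delta> \<epsilon> \<alpha> = \<beta>"
    unfolding conv_inv_def by (rule the_equality[rotated]) (use \<beta> in auto)
  then show "linear (conv_inv \<Delta> \<epsilon> \<alpha>)" "conv \<Delta> \<alpha> (conv_inv \<Delta> \<epsilon> \<alpha>) = \<epsilon>"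
    "conv \<Delta> (conv_inv \<Delta> \<epsilon> \<alpha>) \<alpha> = \<epsilon>"
    using \<beta> by simp_all
qed

lemma idempotent_eq_counit:
  assumes "linear \<alpha>" "\<alpha> 1 = 1" "conv \<Delta> \<alpha> \<alpha> = \<alpha>"
  shows "\<alpha> = \<epsilon>"
proof -
  let ?\<beta> = "conv_inv \<Delta> \<epsilon> \<alpha>"
  have "\<epsilon> = conv \<Delta> (conv \<Delta> \<alpha> \<alpha>) ?\<beta>"
    by (simp only: assms(3) conv_inv(2)[OF assms(1,2)])
  also have "\<dots> = conv \<Delta> \<alpha> (conv \<Delta> \<alpha> ?\<beta>)"
    by (rule conv_assoc[OF assms(1) assms(1) conv_inv(1)[OF assms(1,2)]])
  also have "\<dots> = \<alpha>"
    by (simp only: conv_inv(2)[OF assms(1,2)] conv_counit_right[OF assms(1)])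
  finally show ?thesis by (rule sym)
qed

lemma conv_inv_chain:
  assumes "linear \<alpha>" "\<alpha> 1 = 1" "linear \<beta>" "\<beta> 1 = 1" "linear \<gamma>"
  shows "conv \<Delta> (conv \<Delta> (conv_inv \<Delta> \<epsilon> \<alpha>) \<beta>) (conv \<Delta> (conv_inv \<Delta> \<epsilon> \<beta>) \<gamma>)
           = conv \<Delta> (conv_inv \<Delta> \<epsilon> \<alpha>) \<gamma>"
proof -
  have inv_\<alpha>: "linear (conv_inv \<Delta> \<epsilon> \<alpha>)" and inv_\<beta>: "linear (conv_inv \<Delta> \<epsilon> \<beta>)"
    using assms conv_inv(1) by blast+
  have "conv \<Delta> \<beta> (conv \<Delta> (conv_inv \<Delta> \<epsilon> \<beta>) \<gamma>) = conv \<Delta> (conv \<Delta> \<beta> (conv_inv \<Delta> \<epsilon> \<beta>)) \<gamma>"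
    by (rule conv_assoc[OF assms(3) inv_\<beta> assms(5), symmetric])
  also have "\<dots> = \<gamma>"
    using assms(3-5) by (simp add: conv_inv(2) conv_counit_left)
  finally have \<beta>_cancel: "conv \<Delta> \<beta> (conv \<Delta> (conv_inv \<Delta> \<epsilon> \<beta>) \<gamma>) = \<gamma>" .
  show ?thesis
    using conv_assoc[OF inv_\<alpha> assms(3) conv_linear[OF inv_\<beta> assms(5)]] \<beta>_cancel by simp
qed

end

section \<open>The linear Cartan equation\<close>

locale conv_ode = hopf \<Delta> \<epsilon> Hg
  for \<Delta> :: "'h::{comm_ring_1, real_algebra_1} \<Rightarrow> ('h \<times> 'h) list" and \<epsilon> Hg +
  fixes S :: "real set" and \<eta> :: "real \<Rightarrow> 'h \<Rightarrow> real"
  assumes convex_domain: "convex S"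
    and generator_linear: "t \<in> S \<Longrightarrow> linear (\<eta> t)"
    and generator_unit: "t \<in> S \<Longrightarrow> \<eta> t 1 = 0"
begin

definition solution :: "(real \<Rightarrow> 'h \<Rightarrow> real) \<Rightarrow> bool" where
  "solution \<gamma> \<longleftrightarrow> (\<forall>t\<in>S. linear (\<gamma> t)) \<and>
     (\<forall>t\<in>S. \<forall>x. ((\<lambda>u. \<gamma> u x) has_real_derivative conv \<Delta> (\<gamma> t) (\<eta> t) x) (at t within S))"

text \<open>On \<open>H\<^sub>m\<close> the equation \<open>D' = D \<star> \<eta>\<close> only involves \<open>D\<close> on lower degrees, because \<open>\<eta>\<close>
  kills \<open>H\<^sub>0\<close>.\<close>

lemma solution_vanishes_on_degree:
  assumes D: "solution D" and "s \<in> S" "D s = 0" and "y \<in> Hg m"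
  shows "\<forall>u\<in>S. D u y = 0"
  using \<open>y \<in> Hg m\<close>
proof (induction m arbitrary: y rule: less_induct)
  case (less m)
  have "conv \<Delta> (D u) (\<eta> u) y = 0" if u: "u \<in> S" for u
  proof (rule conv_vanishes_homogeneous[OF _ generator_linear[OF u] less.prems])
    show "linear (D u)"
      using D u by (simp add: solution_def)
    fix i j a b
    assume "i + j = m" "a \<in> Hg i" "b \<in> Hg j"
    show "D u a * \<eta> u b = 0"
    proof (cases "j = 0")
      case True
      with \<open>b \<in> Hg j\<close> have "\<eta> u b = 0"
        using degree_zero_vanishes[OF generator_linear[OF u] generator_unit[OF u]] by simp
      then show ?thesis by simp
    next
      case False
      with \<open>i + j = m\<close> have "i < m" by simp
      with less.IH \<open>a \<in> Hg i\<close> u show ?thesis by simp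
    qed
  qed
  moreover have "((\<lambda>u. D u y) has_real_derivative conv \<Delta> (D u) (\<eta> u) y) (at u within S)"
    if "u \<in> S" for u
    using D that by (simp add: solution_def)
  ultimately have "((\<lambda>u. D u y) has_real_derivative 0) (at u within S)" if "u \<in> S" for u
    using that by simp
  then obtain c where "\<forall>u\<in>S. D u y = c"
    using has_field_derivative_zero_constant[OF convex_domain, of "\<lambda>u. D u y"] by blast
  with \<open>s \<in> S\<close> \<open>D s = 0\<close> show ?case by auto
qed

lemma solution_vanishes:
  assumes D: "solution D" and "s \<in> S" "D s = 0" "t \<in> S"
  shows "D t = 0"
proof -
  have "linear (D t)"
    using D \<open>t \<in> S\<close> by (simp add: solution_def)
  then have "D t x = 0" for x
    by (rule linear_vanishes_by_grading) (use solution_vanishes_on_degree[OF D] assms(2-4) in blast)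
  then show "D t = 0"
    by (simp add: fun_eq_iff)
qed

lemma solution_unique:
  assumes A: "solution A" and B: "solution B" and "s \<in> S" "A s = B s" "t \<in> S"
  shows "A t = B t"
proof -
  have "solution (\<lambda>u. A u - B u)"
    unfolding solution_def
  proof (intro conjI ballI allI)
    fix u x
    assume u: "u \<in> S"
    then show "linear (A u - B u)"
      using A B by (simp add: solution_def fun_diff_def linear_compose_sub)
    have "((\<lambda>u. A u x - B u x) has_real_derivative
            conv \<Delta> (A u) (\<eta> u) x - conv \<Delta> (B u) (\<eta> u) x) (at u within S)"
      using A B u by (intro DERIV_diff) (simp_all add: solution_def)
    then show "((\<lambda>u. (A u - B u) x) has_real_derivative conv \<Delta> (A u - B u) (\<eta> u) x) (at u within S)"
      by (simp add: conv_diff_left)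
  qed
  then have "A t - B t = 0"
    using solution_vanishes[of "\<lambda>u. A u - B u" s t] assms(3-5) by simp
  then show ?thesis by simp
qed

lemma solution_conv_left:
  assumes \<gamma>: "solution \<gamma>" and "linear \<alpha>"
  shows "solution (\<lambda>t. conv \<Delta> \<alpha> (\<gamma> t))"
  unfolding solution_def
proof (intro conjI ballI allI)
  fix t x
  assume t: "t \<in> S"
  then show "linear (conv \<Delta> \<alpha> (\<gamma> t))"
    using \<gamma> \<open>linear \<alpha>\<close> by (simp add: solution_def conv_linear)
  have "((\<lambda>u. conv \<Delta> \<alpha> (\<gamma> u) x) has_real_derivative conv \<Delta> \<alpha> (conv \<Delta> (\<gamma> t) (\<eta> t)) x)
          (at t within S)"
    using \<gamma> t by (intro conv_has_derivative_right) (simp add: solution_def)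
  then show "((\<lambda>u. conv \<Delta> \<alpha> (\<gamma> u) x) has_real_derivative conv \<Delta> (conv \<Delta> \<alpha> (\<gamma> t)) (\<eta> t) x)
               (at t within S)"
    using \<gamma> t \<open>linear \<alpha>\<close> generator_linear[OF t] by (simp add: solution_def conv_assoc)
qed

lemma solution_unit_constant:
  assumes \<gamma>: "solution \<gamma>" and "s \<in> S" "t \<in> S"
  shows "\<gamma> t 1 = \<gamma> s 1"
proof -
  have "((\<lambda>u. \<gamma> u 1) has_real_derivative 0) (at u within S)" if u: "u \<in> S" for u
  proof -
    have "((\<lambda>u. \<gamma> u 1) has_real_derivative conv \<Delta> (\<gamma> u) (\<eta> u) 1) (at u within S)"
      using \<gamma> u by (simp add: solution_def)
    moreover have "conv \<Delta> (\<gamma> u) (\<eta> u) 1 = 0"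
      using \<gamma> u generator_linear[OF u] generator_unit[OF u] by (simp add: solution_def conv_at_unit)
    ultimately show ?thesis by simp
  qed
  then obtain c where "\<forall>u\<in>S. \<gamma> u 1 = c"
    using has_field_derivative_zero_constant[OF convex_domain, of "\<lambda>u. \<gamma> u 1"] by blast
  with assms(2,3) show ?thesis by simp
qed

lemma chen_solution:
  assumes Z_linear: "\<And>s t. s \<in> S \<Longrightarrow> t \<in> S \<Longrightarrow> linear (Z s t)"
    and chen: "\<And>s u t. s \<in> S \<Longrightarrow> u \<in> S \<Longrightarrow> t \<in> S \<Longrightarrow> Z s t = conv \<Delta> (Z s u) (Z u t)"
    and diag: "\<And>t x. t \<in> S \<Longrightarrow> ((\<lambda>u. Z t u x) has_real_derivative \<eta> t x) (at t within S)"
    and "s \<in> S"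
  shows "solution (Z s)"
  unfolding solution_def
proof (intro conjI ballI allI)
  fix t x
  assume t: "t \<in> S"
  show "linear (Z s t)"
    using Z_linear \<open>s \<in> S\<close> t .
  have "((\<lambda>u. conv \<Delta> (Z s t) (Z t u) x) has_real_derivative conv \<Delta> (Z s t) (\<eta> t) x) (at t within S)"
    using diag[OF t] by (rule conv_has_derivative_right)
  then show "((\<lambda>u. Z s u x) has_real_derivative conv \<Delta> (Z s t) (\<eta> t) x) (at t within S)"
  proof (rule has_real_derivative_transform_on)
    show "conv \<Delta> (Z s t) (Z t u) x = Z s u x" if "u \<in> S" for u
      using chen[OF \<open>s \<in> S\<close> t that] by simp
  qed (rule t)
qed

context
  fixes \<gamma> :: "real \<Rightarrow> 'h \<Rightarrow> real"
  assumes \<gamma>: "solution \<gamma>" and \<gamma>_unit: "\<And>t. t \<in> S \<Longrightarrow> \<gamma> t 1 = 1"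
begin

lemma increment_has_derivative:
  assumes s: "s \<in> S"
  shows "((\<lambda>t. conv \<Delta> (conv_inv \<Delta> \<epsilon> (\<gamma> s)) (\<gamma> t) x) has_real_derivative \<eta> s x) (at s within S)"
proof -
  have \<gamma>s: "linear (\<gamma> s)" "\<gamma> s 1 = 1"
    using \<gamma> s \<gamma>_unit by (simp_all add: solution_def)
  have "((\<lambda>t. conv \<Delta> (conv_inv \<Delta> \<epsilon> (\<gamma> s)) (\<gamma> t) x) has_real_derivative
          conv \<Delta> (conv_inv \<Delta> \<epsilon> (\<gamma> s)) (conv \<Delta> (\<gamma> s) (\<eta> s)) x) (at s within S)"
    using \<gamma> s by (intro conv_has_derivative_right) (simp add: solution_def)
  moreover have "conv \<Delta> (conv_inv \<Delta> \<epsilon> (\<gamma> s)) (conv \<Delta> (\<gamma> s) (\<eta> s)) = \<eta> s"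
    using conv_assoc[OF conv_inv(1)[OF \<gamma>s] \<gamma>s(1) generator_linear[OF s], symmetric]
    by (simp add: conv_inv \<gamma>s conv_counit_left generator_linear[OF s])
  ultimately show ?thesis by simp
qed

lemma chen_eq_increment:
  assumes Z_linear: "\<And>s t. s \<in> S \<Longrightarrow> t \<in> S \<Longrightarrow> linear (Z s t)"
    and chen: "\<And>s u t. s \<in> S \<Longrightarrow> u \<in> S \<Longrightarrow> t \<in> S \<Longrightarrow> Z s t = conv \<Delta> (Z s u) (Z u t)"
    and diag: "\<And>t x. t \<in> S \<Longrightarrow> ((\<lambda>u. Z t u x) has_real_derivative \<eta> t x) (at t within S)"
    and Z_diag: "\<And>t. t \<in> S \<Longrightarrow> Z t t = \<epsilon>"
    and s: "s \<in> S" and t: "t \<in> S"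
  shows "Z s t = conv \<Delta> (conv_inv \<Delta> \<epsilon> (\<gamma> s)) (\<gamma> t)"
proof -
  have \<gamma>s: "linear (\<gamma> s)" "\<gamma> s 1 = 1"
    using \<gamma> s \<gamma>_unit by (simp_all add: solution_def)
  have sol: "solution (\<lambda>u. conv \<Delta> (\<gamma> s) (Z s u))"
    using chen_solution[OF Z_linear chen diag s] \<gamma>s(1) by (rule solution_conv_left)
  have init: "conv \<Delta> (\<gamma> s) (Z s s) = \<gamma> s"
    using Z_diag[OF s] \<gamma>s(1) by (simp add: conv_counit_right)
  have \<gamma>_t: "conv \<Delta> (\<gamma> s) (Z s t) = \<gamma> t"
    using solution_unique[OF sol \<gamma> s init t] .
  have "Z s t = conv \<Delta> (conv \<Delta> (conv_inv \<Delta> \<epsilon> (\<gamma> s)) (\<gamma> s)) (Z s t)"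
    using \<gamma>s Z_linear[OF s t] by (simp add: conv_inv(3) conv_counit_left)
  also have "\<dots> = conv \<Delta> (conv_inv \<Delta> \<epsilon> (\<gamma> s)) (conv \<Delta> (\<gamma> s) (Z s t))"
    by (rule conv_assoc[OF conv_inv(1)[OF \<gamma>s] \<gamma>s(1) Z_linear[OF s t]])
  finally show ?thesis
    by (simp only: \<gamma>_t)
qed

end

end

section \<open>Smooth rough paths and their canonical sum\<close>

context hopf
begin

context
  fixes T :: real and X :: "real \<Rightarrow> real \<Rightarrow> 'h \<Rightarrow> real"
  assumes T_pos: "0 < T" and X: "shrm \<Delta> T X"
begin

lemma shrm_linear: "s \<in> {0..T} \<Longrightarrow> t \<in> {0..T} \<Longrightarrow> linear (X s t)"
  using X by (simp add: shrm_def character_def)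

lemma shrm_unit: "s \<in> {0..T} \<Longrightarrow> t \<in> {0..T} \<Longrightarrow> X s t 1 = 1"
  using X by (simp add: shrm_def character_def)

lemma shrm_chen: "s \<in> {0..T} \<Longrightarrow> u \<in> {0..T} \<Longrightarrow> t \<in> {0..T} \<Longrightarrow> conv \<Delta> (X s u) (X u t) = X s t"
  using X by (simp add: shrm_def)

lemma shrm_diagonal: "s \<in> {0..T} \<Longrightarrow> X s s = \<epsilon>"
  using idempotent_eq_counit shrm_linear shrm_unit shrm_chen by blast

lemma shrm_has_diag_deriv:
  assumes s: "s \<in> {0..T}"
  shows "((\<lambda>t. X s t x) has_real_derivative diag_deriv T X s x) (at s within {0..T})"
proof -
  have "smooth_on {0..T} (\<lambda>t. X s t x)"
    using X s by (simp add: shrm_def)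
  then obtain D where D: "((\<lambda>t. X s t x) has_real_derivative D) (at s within {0..T})"
    using s by (rule smooth_on_has_real_derivative)
  moreover have "diag_deriv T X s x = D"
    unfolding diag_deriv_def
    by (rule the_equality[of "\<lambda>D. ((\<lambda>t. X s t x) has_real_derivative D) (at s within {0..T})", OF D])
      (use has_real_derivative_unique_atLeastAtMost[OF T_pos s D] in blast)
  ultimately show ?thesis by simp
qed

lemma diag_deriv_eqI:
  assumes "s \<in> {0..T}" "((\<lambda>t. X s t x) has_real_derivative D) (at s within {0..T})"
  shows "diag_deriv T X s x = D"
  using has_real_derivative_unique_atLeastAtMost[OF T_pos assms(1) shrm_has_diag_deriv assms(2)]
    assms(1) .

lemma diag_deriv_linear:
  assumes s: "s \<in> {0..T}"
  shows "linear (diag_deriv T X s)"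
proof (rule linearI)
  fix a b
  have "((\<lambda>t. X s t a + X s t b) has_real_derivative diag_deriv T X s a + diag_deriv T X s b)
          (at s within {0..T})"
    using s by (intro DERIV_add shrm_has_diag_deriv)
  then have "((\<lambda>t. X s t (a + b)) has_real_derivative diag_deriv T X s a + diag_deriv T X s b)
               (at s within {0..T})"
    by (rule has_real_derivative_transform_on) (use s shrm_linear[OF s] in \<open>auto simp: linear_add\<close>)
  then show "diag_deriv T X s (a + b) = diag_deriv T X s a + diag_deriv T X s b"
    by (rule diag_deriv_eqI[OF s])
next
  fix c a
  have "((\<lambda>t. c * X s t a) has_real_derivative c * diag_deriv T X s a) (at s within {0..T})"
    using s by (intro DERIV_cmult shrm_has_diag_deriv)
  then have "((\<lambda>t. X s t (c *\<^sub>R a)) has_real_derivative c * diag_deriv T X s a) (at s within {0..T})"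
    by (rule has_real_derivative_transform_on) (use s shrm_linear[OF s] in \<open>auto simp: linear_scale\<close>)
  then show "diag_deriv T X s (c *\<^sub>R a) = c *\<^sub>R diag_deriv T X s a"
    using diag_deriv_eqI[OF s] by simp
qed

lemma diag_deriv_unit:
  assumes s: "s \<in> {0..T}"
  shows "diag_deriv T X s 1 = 0"
proof (rule diag_deriv_eqI[OF s])
  show "((\<lambda>t. X s t 1) has_real_derivative 0) (at s within {0..T})"
    by (rule has_real_derivative_transform_on[OF DERIV_const]) (use s shrm_unit[OF s] in auto)
qed

end

lemma conv_shrm_has_derivative:
  assumes "0 < T" "shrm \<Delta> T X" "shrm \<Delta> T Y" "s \<in> {0..T}"
  shows "((\<lambda>t. conv \<Delta> (X s t) (Y s t) x) has_real_derivative
            diag_deriv T X s x + diag_deriv T Y s x) (at s within {0..T})"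
proof -
  have "((\<lambda>t. conv \<Delta> (X s t) (Y s t) x) has_real_derivative
          conv \<Delta> (diag_deriv T X s) (Y s s) x + conv \<Delta> (X s s) (diag_deriv T Y s) x)
          (at s within {0..T})"
    using assms by (intro conv_has_derivative shrm_has_diag_deriv)
  then show ?thesis
    using assms by (simp add: shrm_diagonal diag_deriv_linear conv_counit_left conv_counit_right)
qed

lemma shrm_product_expansions:
  assumes T: "0 < T" and X: "shrm \<Delta> T X" and Y: "shrm \<Delta> T Y" and s: "s \<in> {0..T}"
  shows "\<exists>r r' :: real \<Rightarrow> 'h \<Rightarrow> real.
           (\<forall>t\<in>{0..T}. linear (r t) \<and> linear (r' t) \<and>
              conv \<Delta> (X s t) (Y s t) = conv \<Delta> (Y s t) (X s t) + r t \<and>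
              conv \<Delta> (X s t) (Y s t) = X s t + Y s t - \<epsilon> + r' t) \<and>
           (\<forall>x. (\<lambda>t. r t x) \<in> o[at s within {0..T}](\<lambda>t. \<bar>t - s\<bar>) \<and>
                (\<lambda>t. r' t x) \<in> o[at s within {0..T}](\<lambda>t. \<bar>t - s\<bar>))"
proof -
  let ?I = "{0..T}" and ?\<eta> = "\<lambda>x. diag_deriv T X s x + diag_deriv T Y s x"
  have X_s: "linear (X s t)" and Y_s: "linear (Y s t)" if "t \<in> ?I" for t
    using shrm_linear[OF T X s that] shrm_linear[OF T Y s that] .
  have X_ss: "X s s = \<epsilon>" and Y_ss: "Y s s = \<epsilon>"
    using shrm_diagonal[OF T X s] shrm_diagonal[OF T Y s] .
  have XY_deriv: "\<forall>x. ((\<lambda>t. conv \<Delta> (X s t) (Y s t) x) has_real_derivative ?\<eta> x) (at s within ?I)"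
    using conv_shrm_has_derivative[OF T X Y s] by blast
  have "\<exists>r. (\<forall>t\<in>?I. linear (r t) \<and> conv \<Delta> (X s t) (Y s t) = conv \<Delta> (Y s t) (X s t) + r t) \<and>
            (\<forall>x. (\<lambda>t. r t x) \<in> o[at s within ?I](\<lambda>t. \<bar>t - s\<bar>))"
  proof (rule remainder_smallo_iff_has_derivative[THEN iffD2])
    show "((\<lambda>t. conv \<Delta> (Y s t) (X s t) x) has_real_derivative ?\<eta> x) (at s within ?I)" for x
      using conv_shrm_has_derivative[OF T Y X s] by (simp add: add.commute)
    show "conv \<Delta> (Y s s) (X s s) = conv \<Delta> (X s s) (Y s s)"
      by (simp add: X_ss Y_ss)
    show "linear (conv \<Delta> (Y s t) (X s t))" "linear (conv \<Delta> (X s t) (Y s t))" if "t \<in> ?I" for t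
      using X_s[OF that] Y_s[OF that] by (simp_all add: conv_linear)
  qed (use s XY_deriv in auto)
  moreover have "\<exists>r'. (\<forall>t\<in>?I. linear (r' t) \<and> conv \<Delta> (X s t) (Y s t) = X s t + Y s t - \<epsilon> + r' t) \<and>
            (\<forall>x. (\<lambda>t. r' t x) \<in> o[at s within ?I](\<lambda>t. \<bar>t - s\<bar>))"
  proof (rule remainder_smallo_iff_has_derivative[THEN iffD2])
    show "((\<lambda>t. (X s t + Y s t - \<epsilon>) x) has_real_derivative ?\<eta> x) (at s within ?I)" for x
      using DERIV_diff[OF DERIV_add[OF shrm_has_diag_deriv[OF T X s] shrm_has_diag_deriv[OF T Y s]]
          DERIV_const[of "\<epsilon> x"]] by simp
    show "X s s + Y s s - \<epsilon> = conv \<Delta> (X s s) (Y s s)"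
      by (simp add: X_ss Y_ss conv_counit_left counit_linear)
    show "linear (X s t + Y s t - \<epsilon>)" "linear (conv \<Delta> (X s t) (Y s t))" if "t \<in> ?I" for t
      using X_s[OF that] Y_s[OF that] counit_linear
      by (simp_all add: conv_linear plus_fun_def fun_diff_def linear_compose_add linear_compose_sub)
  qed (use s XY_deriv in auto)
  ultimately show ?thesis
    by blast
qed

lemma diag_deriv_sum_conv_ode:
  assumes T: "0 < T" and X: "shrm \<Delta> T X" and Y: "shrm \<Delta> T Y"
  shows "conv_ode \<Delta> \<epsilon> Hg {0..T} (\<lambda>t. diag_deriv T X t + diag_deriv T Y t)"
proof (intro conv_ode.intro conv_ode_axioms.intro)
  show "linear (diag_deriv T X t + diag_deriv T Y t)" if "t \<in> {0..T}" for t
    using diag_deriv_linear[OF T X that] diag_deriv_linear[OF T Y that]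
    by (simp add: plus_fun_def linear_compose_add)
  show "(diag_deriv T X t + diag_deriv T Y t) 1 = 0" if "t \<in> {0..T}" for t
    using diag_deriv_unit[OF T X that] diag_deriv_unit[OF T Y that] by simp
qed (simp_all add: hopf.intro conn_graded_hopf)

lemma shrm_expansion_iff_has_derivative:
  assumes T: "0 < T" and X: "shrm \<Delta> T X" and Y: "shrm \<Delta> T Y" and s: "s \<in> {0..T}"
    and G_linear: "\<And>t. t \<in> {0..T} \<Longrightarrow> linear (G t)" and "G s = \<epsilon>"
  shows "(\<exists>R. (\<forall>t\<in>{0..T}. linear (R t) \<and> G t = conv \<Delta> (X s t) (Y s t) + R t) \<and>
              (\<forall>x. (\<lambda>t. R t x) \<in> o[at s within {0..T}](\<lambda>t. \<bar>t - s\<bar>)))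
    \<longleftrightarrow> (\<forall>x. ((\<lambda>t. G t x) has_real_derivative diag_deriv T X s x + diag_deriv T Y s x)
                (at s within {0..T}))"
proof (rule remainder_smallo_iff_has_derivative)
  show "conv \<Delta> (X s s) (Y s s) = G s"
    using s T X Y \<open>G s = \<epsilon>\<close> by (simp add: shrm_diagonal conv_counit_left counit_linear)
  show "linear (conv \<Delta> (X s t) (Y s t))" if "t \<in> {0..T}" for t
    using s that T X Y by (simp add: conv_linear shrm_linear)
qed (use s G_linear conv_shrm_has_derivative[OF T X Y s] in auto)

lemma canonical_sum_iff:
  assumes T: "0 < T" and X: "shrm \<Delta> T X" and Y: "shrm \<Delta> T Y"
    and \<gamma>: "cartan_dev \<Delta> \<epsilon> T (\<lambda>t. diag_deriv T X t + diag_deriv T Y t) \<gamma>"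
    and Z: "\<forall>s\<in>{0..T}. \<forall>t\<in>{0..T}. character (Z s t)"
  shows "(\<forall>s\<in>{0..T}. \<forall>t\<in>{0..T}. Z s t = conv \<Delta> (conv_inv \<Delta> \<epsilon> (\<gamma> s)) (\<gamma> t)) \<longleftrightarrow>
          ((\<forall>s\<in>{0..T}. \<forall>u\<in>{0..T}. \<forall>t\<in>{0..T}. Z s t = conv \<Delta> (Z s u) (Z u t)) \<and>
           (\<forall>s\<in>{0..T}. \<exists>R::real \<Rightarrow> 'h \<Rightarrow> real.
              (\<forall>t\<in>{0..T}. linear (R t) \<and> Z s t = conv \<Delta> (X s t) (Y s t) + R t) \<and>
              (\<forall>x. (\<lambda>t. R t x) \<in> o[at s within {0..T}](\<lambda>t. \<bar>t - s\<bar>))))"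
    (is "?increments \<longleftrightarrow> ?chen \<and> ?expansion")
proof -
  let ?I = "{0..T}" and ?\<eta> = "\<lambda>t. diag_deriv T X t + diag_deriv T Y t"
  interpret conv_ode \<Delta> \<epsilon> Hg ?I ?\<eta>
    using diag_deriv_sum_conv_ode[OF T X Y] .
  have \<gamma>_solution: "solution \<gamma>"
    using \<gamma> by (simp add: cartan_dev_def solution_def)
  have \<gamma>_unit: "\<gamma> t 1 = 1" if "t \<in> ?I" for t
    using solution_unit_constant[OF \<gamma>_solution _ that, of 0] \<gamma> T
    by (simp add: cartan_dev_def counit_unit)
  have Z_linear: "linear (Z s t)" and Z_unit: "Z s t 1 = 1" if "s \<in> ?I" "t \<in> ?I" for s t
    using Z that by (simp_all add: character_def)
  have expansion_iff: "(\<exists>R. (\<forall>t\<in>?I. linear (R t) \<and> Z s t = conv \<Delta> (X s t) (Y s t) + R t) \<and>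
                         (\<forall>x. (\<lambda>t. R t x) \<in> o[at s within ?I](\<lambda>t. \<bar>t - s\<bar>)))
      \<longleftrightarrow> (\<forall>x. ((\<lambda>t. Z s t x) has_real_derivative ?\<eta> s x) (at s within ?I))"
    if s: "s \<in> ?I" and "Z s s = \<epsilon>" for s
    using shrm_expansion_iff_has_derivative[OF T X Y s, of "Z s"] Z_linear[OF s] that by simp
  show ?thesis
  proof
    assume increments: ?increments
    have Z_diag: "Z s s = \<epsilon>" if "s \<in> ?I" for s
      using increments \<gamma>_solution \<gamma>_unit that by (simp add: solution_def conv_inv)
    have ?chen
      using increments \<gamma>_solution \<gamma>_unit by (simp add: solution_def conv_inv_chain)
    moreover have "((\<lambda>t. Z s t x) has_real_derivative ?\<eta> s x) (at s within ?I)" if "s \<in> ?I" for s x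
      using increment_has_derivative[OF \<gamma>_solution \<gamma>_unit that, of x] that increments
      by (auto intro: has_real_derivative_transform_on)
    then have ?expansion
      using expansion_iff Z_diag by blast
    ultimately show "?chen \<and> ?expansion" ..
  next
    assume "?chen \<and> ?expansion"
    then have chen: ?chen and expansion: ?expansion by blast+
    have Z_diag: "Z s s = \<epsilon>" if "s \<in> ?I" for s
      using idempotent_eq_counit[OF Z_linear[OF that that] Z_unit[OF that that]] chen that by metis
    have "((\<lambda>u. Z t u x) has_real_derivative ?\<eta> t x) (at t within ?I)" if "t \<in> ?I" for t x
      using expansion_iff[OF that Z_diag[OF that]] expansion that by blast
    then show ?increments
      using chen_eq_increment[OF \<gamma>_solution \<gamma>_unit] Z_linear chen Z_diag by blast
  qed
qed

end

theorem proposition4p16: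
  fixes \<Delta> :: "'h::{comm_ring_1, real_algebra_1} \<Rightarrow> ('h \<times> 'h) list"
    and \<epsilon> :: "'h \<Rightarrow> real" and Hg :: "nat \<Rightarrow> 'h set" and T :: real
    and X Y Z :: "real \<Rightarrow> real \<Rightarrow> 'h \<Rightarrow> real" and \<gamma> :: "real \<Rightarrow> 'h \<Rightarrow> real"
  assumes "0 < T"
    and "conn_graded_hopf \<Delta> \<epsilon> Hg"
    and "shrm \<Delta> T X" and "shrm \<Delta> T Y"
    and "cartan_dev \<Delta> \<epsilon> T (\<lambda>t. diag_deriv T X t + diag_deriv T Y t) \<gamma>"
    and "\<forall>s\<in>{0..T}. \<forall>t\<in>{0..T}. character (Z s t)"
  shows "((\<forall>s\<in>{0..T}. \<forall>t\<in>{0..T}. Z s t = conv \<Delta> (conv_inv \<Delta> \<epsilon> (\<gamma> s)) (\<gamma> t)) \<longleftrightarrow>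
          ((\<forall>s\<in>{0..T}. \<forall>u\<in>{0..T}. \<forall>t\<in>{0..T}. Z s t = conv \<Delta> (Z s u) (Z u t)) \<and>
           (\<forall>s\<in>{0..T}. \<exists>R::real \<Rightarrow> 'h \<Rightarrow> real.
              (\<forall>t\<in>{0..T}. linear (R t) \<and> Z s t = conv \<Delta> (X s t) (Y s t) + R t) \<and>
              (\<forall>x. (\<lambda>t. R t x) \<in> o[at s within {0..T}](\<lambda>t. \<bar>t - s\<bar>)))))
        \<and> (\<forall>s\<in>{0..T}. \<exists>r r' :: real \<Rightarrow> 'h \<Rightarrow> real.
              (\<forall>t\<in>{0..T}. linear (r t) \<and> linear (r' t) \<and>
                 conv \<Delta> (X s t) (Y s t) = conv \<Delta> (Y s t) (X s t) + r t \<and>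
                 conv \<Delta> (X s t) (Y s t) = X s t + Y s t - \<epsilon> + r' t) \<and>
              (\<forall>x. (\<lambda>t. r t x) \<in> o[at s within {0..T}](\<lambda>t. \<bar>t - s\<bar>) \<and>
                   (\<lambda>t. r' t x) \<in> o[at s within {0..T}](\<lambda>t. \<bar>t - s\<bar>)))"
proof -
  interpret hopf \<Delta> \<epsilon> Hg
    using assms(2) by (rule hopf.intro)
  show ?thesis
    using canonical_sum_iff[OF assms(1,3-6)] shrm_product_expansions[OF assms(1,3,4)] by blast
qed

end
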